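(* Let $\alpha\in\mathbb{Q}(i)\setminus\mathbb{R}$ with $|\alpha|>1$, with minimal primitive polynomial $P_\alpha(X)=a_2X^2+a_1X+a_0$ ($a_0,a_1,a_2\in\mathbb{Z}$ coprime, $a_2>0$, $P_\alpha(\alpha)=0$), and $\mathcal{D}=\{0,\ldots,|a_0|-1\}$; write $\alpha=\frac{num(\alpha)}{den(\alpha)}$ with $num(\alpha),den(\alpha)\in\mathbb{Z}[i]$ having no common Gaussian prime divisor. Then for every $k\in\mathbb{Z}$ and every sequence $(d_j)_{j\le k}$ in $\mathcal{D}$, the series $\sum_{j\le k}d_j\alpha^j$ converges in $\mathbb{C}$ and in $K_p$ for every Gaussian prime $p$ dividing $den(\alpha)$; hence it is the $\alpha$-expansion of some ambinumber $(x,y)\in\mathbb{C}\times K_{den(\alpha)}$.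
   Context: For a Gaussian prime $p$, $\nu_p$ is the exponent of $p$ in the Gaussian prime factorization of a nonzero element of $\mathbb{Q}(i)$ ($\nu_p(0)=\infty$), $|x|_p=N(p)^{-\nu_p(x)}$ with $N(p)$ the norm of $p$, and $K_p$ is the completion of $\mathbb{Q}(i)$ for $|\cdot|_p$. $K_{den(\alpha)}=\prod_{p\mid den(\alpha)}K_p$ (product over Gaussian primes, up to associates). For $(x,y)\in\mathbb{C}\times K_{den(\alpha)}$ with $y=(y_p)_p$, a series $\sum_{j\le k}d_j\alpha^j$ ($d_j\in\mathcal{D}$, $d_k\ne0$ whenever $k\ge1$) is an $\alpha$-expansion of $(x,y)$ if it converges to $x$ in $\mathbb{C}$ and to $y_p$ in $K_p$ for each $p\mid den(\alpha)$. *)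

theory Defs
  imports "HOL-Analysis.Analysis"
begin

definition gauss_int :: "complex \<Rightarrow> bool" where
  "gauss_int z \<longleftrightarrow> Re z \<in> \<int> \<and> Im z \<in> \<int>"

definition gauss_rat :: "complex \<Rightarrow> bool" where
  "gauss_rat z \<longleftrightarrow> Re z \<in> \<rat> \<and> Im z \<in> \<rat>"

definition gdvd :: "complex \<Rightarrow> complex \<Rightarrow> bool" where
  "gdvd a b \<longleftrightarrow> (\<exists>c. gauss_int c \<and> b = a * c)"

definition gauss_prime :: "complex \<Rightarrow> bool" where
  "gauss_prime p \<longleftrightarrow> gauss_int p \<and> p \<noteq> 0 \<and> \<not> gdvd p 1 \<and>
     (\<forall>a b. gauss_int a \<longrightarrow> gauss_int b \<longrightarrow> gdvd p (a * b) \<longrightarrow> gdvd p a \<or> gdvd p b)"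

definition gnorm :: "complex \<Rightarrow> real" where
  "gnorm p = (cmod p)\<^sup>2"

definition gval :: "complex \<Rightarrow> complex \<Rightarrow> int" where
  "gval p x = (THE n. \<exists>u v. gauss_int u \<and> gauss_int v \<and> v \<noteq> 0 \<and>
                  \<not> gdvd p u \<and> \<not> gdvd p v \<and> x = p powi n * u / v)"

definition gabs :: "complex \<Rightarrow> complex \<Rightarrow> real" where
  "gabs p x = (if x = 0 then 0 else gnorm p powi (- gval p x))"

text \<open>A sequence in Q(i) converges in the completion K_p iff it is Cauchy for |.|_p.\<close>
definition p_cauchy :: "complex \<Rightarrow> (nat \<Rightarrow> complex) \<Rightarrow> bool" where
  "p_cauchy p S \<longleftrightarrow> (\<forall>e>0. \<exists>M. \<forall>m\<ge>M. \<forall>n\<ge>M. gabs p (S m - S n) < e)"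

end

theory Submission
  imports Defs
begin

text \<open>In \<open>\<complex>\<close> the series is dominated by a geometric series, since the digits are
bounded and \<open>|\<alpha>| > 1\<close>. Now let \<open>p\<close> be a Gaussian prime dividing \<open>den\<close>, hence not \<open>num\<close>.
Since \<open>\<alpha> powi (-a) = den ^ a / num ^ a\<close>, the block of terms with indices \<open>n \<le> i < m\<close>
(exponents \<open>k - i\<close>) is \<open>p ^ (n - k)\<close> times a quotient of Gaussian integers whose
denominator \<open>num ^ (m - k)\<close> is prime to \<open>p\<close>. Its \<open>p\<close>-adic absolute value is therefore at
most \<open>N(p) powi (k - n)\<close>, so the partial sums are \<open>p\<close>-adically Cauchy.\<close>

lemma gauss_int_add: "gauss_int a \<Longrightarrow> gauss_int b \<Longrightarrow> gauss_int (a + b)"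
  and gauss_int_uminus: "gauss_int a \<Longrightarrow> gauss_int (- a)"
  and gauss_int_mult: "gauss_int a \<Longrightarrow> gauss_int b \<Longrightarrow> gauss_int (a * b)"
  and gauss_int_of_int: "gauss_int (of_int n)"
  and gauss_int_cnj: "gauss_int a \<Longrightarrow> gauss_int (cnj a)"
  by (auto simp: gauss_int_def)

lemma gauss_int_power: "gauss_int a \<Longrightarrow> gauss_int (a ^ n)"
  by (induction n) (auto intro: gauss_int_mult simp: gauss_int_def)

lemma gauss_int_sum: "(\<And>i. i \<in> A \<Longrightarrow> gauss_int (f i)) \<Longrightarrow> gauss_int (sum f A)"
  by (induction A rule: infinite_finite_induct) (auto intro: gauss_int_add simp: gauss_int_def)

lemma gauss_int_norm_ge_1:
  assumes "gauss_int z" "z \<noteq> 0"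
  shows "cmod z \<ge> 1"
proof -
  obtain a b where ab: "Re z = of_int a" "Im z = of_int b"
    using assms(1) by (auto simp: gauss_int_def elim!: Ints_cases)
  have "a \<noteq> 0 \<or> b \<noteq> 0" using assms(2) ab by (auto simp: complex_eq_iff)
  hence "1 \<le> a\<^sup>2 + b\<^sup>2" by (smt (verit) zero_le_power2 power2_less_eq_zero_iff)
  hence "1 \<le> (cmod z)\<^sup>2"
    using ab unfolding cmod_power2 by (metis of_int_1_le_iff of_int_add of_int_power)
  thus ?thesis using power2_le_imp_le[of 1 "cmod z"] by simp
qed

lemma gauss_prime_norm_gt_1:
  assumes "gauss_prime p"
  shows "cmod p > 1"
proof -
  have p: "gauss_int p" "p \<noteq> 0" "\<not> gdvd p 1" using assms by (auto simp: gauss_prime_def)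
  have "cmod p \<noteq> 1"
  proof
    assume "cmod p = 1"
    hence "1 = p * cnj p" using complex_norm_square[of p] by simp
    thus False using p gauss_int_cnj unfolding gdvd_def by blast
  qed
  moreover have "cmod p \<ge> 1" using gauss_int_norm_ge_1 p by blast
  ultimately show ?thesis by simp
qed

lemma gnorm_gauss_prime_gt_1: "gauss_prime p \<Longrightarrow> gnorm p > 1"
  unfolding gnorm_def using gauss_prime_norm_gt_1 by (simp add: one_less_power)

lemma gauss_prime_dvd_power:
  assumes "gauss_prime p" "gauss_int a" "gdvd p (a ^ n)"
  shows "gdvd p a"
  using assms(3)
proof (induction n)
  case 0
  thus ?case using assms(1) by (simp add: gauss_prime_def)
next
  case (Suc n)
  thus ?case using assms(1,2) gauss_int_power[OF assms(2)] unfolding gauss_prime_def by auto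
qed

lemma gauss_int_factor_prime_power:
  assumes p: "gauss_prime p" and w: "gauss_int w" "w \<noteq> 0"
  obtains f u where "gauss_int u" "\<not> gdvd p u" "w = p ^ f * u"
proof -
  define S where "S = {f. \<exists>c. gauss_int c \<and> w = p ^ f * c}"
  have p1: "cmod p > 1" using gauss_prime_norm_gt_1[OF p] .
  obtain f0 where f0: "cmod w < cmod p ^ f0" using real_arch_pow[OF p1] by blast
  have "f < f0" if "f \<in> S" for f
  proof -
    obtain c where c: "gauss_int c" "w = p ^ f * c" using \<open>f \<in> S\<close> by (auto simp: S_def)
    have "cmod p ^ f \<le> cmod p ^ f * cmod c"
      using gauss_int_norm_ge_1[of c] c w by (simp add: mult_le_cancel_left1)
    also have "\<dots> = cmod w" using c(2) by (simp add: norm_mult norm_power)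
    finally have "cmod p ^ f < cmod p ^ f0" using f0 by linarith
    thus ?thesis using power_strict_increasing_iff[OF p1] by blast
  qed
  hence fin: "finite S" unfolding finite_nat_set_iff_bounded by blast
  have "0 \<in> S" using w by (auto simp: S_def)
  hence "Max S \<in> S" using fin by (intro Max_in) auto
  then obtain c where c: "gauss_int c" "w = p ^ Max S * c" by (auto simp: S_def)
  have "\<not> gdvd p c"
  proof
    assume "gdvd p c"
    then obtain c' where c': "gauss_int c'" "c = p * c'" by (auto simp: gdvd_def)
    hence "w = p ^ Suc (Max S) * c'" using c(2) by (simp add: mult.assoc)
    hence "Suc (Max S) \<in> S" using c'(1) unfolding S_def by blast
    hence "Suc (Max S) \<le> Max S" using fin by simp
    thus False by simp
  qed
  thus ?thesis using that c by blast
qed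

lemma gauss_prime_not_dvd_mult:
  assumes "gauss_prime p" "gauss_int u" "gauss_int v" "\<not> gdvd p u" "\<not> gdvd p v"
  shows "\<not> gdvd p (u * v)"
  using assms unfolding gauss_prime_def by blast

lemma gval_eq:
  assumes p: "gauss_prime p"
    and u: "gauss_int u" "\<not> gdvd p u" and v: "gauss_int v" "v \<noteq> 0" "\<not> gdvd p v"
  shows "gval p (p powi n * u / v) = n"
proof -
  have p0: "p \<noteq> 0" using p by (simp add: gauss_prime_def)
  have False
    if "n1 < n2" "p powi n1 * u1 / v1 = p powi n2 * u2 / v2"
      "gauss_int u1" "\<not> gdvd p u1" "gauss_int v1" "v1 \<noteq> 0"
      "gauss_int u2" "gauss_int v2" "v2 \<noteq> 0" "\<not> gdvd p v2"
    for n1 n2 u1 v1 u2 v2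
  proof -
    define e where "e = nat (n2 - n1 - 1)"
    have "n2 = n1 + 1 + int e" using that(1) by (simp add: e_def)
    hence "p powi n2 = p powi n1 * p * p ^ e" using p0 by (simp add: power_int_add)
    hence "u1 * v2 = p * (p ^ e * u2 * v1)"
      using that(2,6,9) p0 by (simp add: field_simps power_int_eq_0_iff)
    moreover have "gauss_int (p ^ e * u2 * v1)"
      using p that by (simp add: gauss_prime_def gauss_int_mult gauss_int_power)
    ultimately have "gdvd p (u1 * v2)" unfolding gdvd_def by blast
    thus False using gauss_prime_not_dvd_mult[OF p] that by blast
  qed
  then show ?thesis
    unfolding gval_def using u v by (intro the_equality) (blast, metis linorder_neqE)
qed

lemma gabs_prime_power_mult_le:
  assumes p: "gauss_prime p" and W: "gauss_int W" and V: "gauss_int V" "V \<noteq> 0" "\<not> gdvd p V"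
  shows "gabs p (p ^ t * W / V) \<le> inverse (gnorm p ^ t)"
proof (cases "W = 0")
  case True
  thus ?thesis by (simp add: gabs_def gnorm_def)
next
  case False
  obtain f u where u: "gauss_int u" "\<not> gdvd p u" "W = p ^ f * u"
    using gauss_int_factor_prime_power[OF p W False] .
  have p0: "p \<noteq> 0" using p by (simp add: gauss_prime_def)
  have repr: "p ^ t * W / V = p powi int (t + f) * u / V"
    unfolding power_int_of_nat power_add using u(3) by (simp add: mult.assoc)
  have "gval p (p ^ t * W / V) = int (t + f)"
    unfolding repr by (rule gval_eq[OF p u(1,2) V])
  moreover have "p ^ t * W / V \<noteq> 0" using False V p0 by simp
  ultimately have "gabs p (p ^ t * W / V) = gnorm p powi (- int (t + f))"
    unfolding gabs_def by (simp only: if_False)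
  also have "\<dots> \<le> gnorm p powi (- int t)"
    using gnorm_gauss_prime_gt_1[OF p] by (intro power_int_increasing) auto
  also have "\<dots> = inverse (gnorm p ^ t)" by (simp add: power_int_minus)
  finally show ?thesis .
qed

lemma digit_block_prime_power_form:
  fixes num p c :: complex and k :: int and d :: "int \<Rightarrow> int"
  assumes num: "gauss_int num" "num \<noteq> 0" and pc: "gauss_int p" "gauss_int c"
    and "n \<le> m" "k \<le> int n"
  obtains W where "gauss_int W"
    "(\<Sum>i\<in>{n..<m}. of_int (d (k - int i)) * (num / (p * c)) powi (k - int i))
       = p ^ nat (int n - k) * W / num ^ nat (int m - k)"
proof -
  \<comment> \<open>Over the common denominator \<open>num ^ B\<close>, the numerator \<open>(p * c) ^ a i\<close> of every
    term still contains the factor \<open>p ^ t\<close>.\<close>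
  define t where "t = nat (int n - k)"
  define B where "B = nat (int m - k)"
  define a where "a i = nat (int i - k)" for i :: nat
  define W where
    "W = (\<Sum>i\<in>{n..<m}. of_int (d (k - int i)) * p ^ (a i - t) * c ^ a i * num ^ (B - a i))"
  have "gauss_int W"
    unfolding W_def using num pc
    by (intro gauss_int_sum gauss_int_mult gauss_int_power gauss_int_of_int)
  moreover have "of_int (d (k - int i)) * (num / (p * c)) powi (k - int i)
      = p ^ t * (of_int (d (k - int i)) * p ^ (a i - t) * c ^ a i * num ^ (B - a i)) / num ^ B"
    if "i \<in> {n..<m}" for i
  proof -
    have ta: "t \<le> a i" "a i \<le> B" using that assms by (auto simp: t_def a_def B_def)
    have "k - int i = - int (a i)" using that assms by (simp add: a_def)
    hence "(num / (p * c)) powi (k - int i) = (p * c) ^ a i / num ^ a i"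
      by (simp add: power_int_minus power_divide)
    also have "(p * c) ^ a i = p ^ t * p ^ (a i - t) * c ^ a i"
      using ta by (simp add: power_mult_distrib flip: power_add)
    also have "num ^ a i = num ^ B / num ^ (B - a i)"
      using ta num by (simp add: power_diff)
    finally show ?thesis using num by (simp add: field_simps)
  qed
  hence "(\<Sum>i\<in>{n..<m}. of_int (d (k - int i)) * (num / (p * c)) powi (k - int i))
      = p ^ t * W / num ^ B"
    unfolding W_def by (simp add: sum_divide_distrib sum_distrib_left)
  ultimately show ?thesis using that unfolding t_def B_def by blast
qed

lemma p_cauchyI:
  assumes "\<And>m n. M \<le> min m n \<Longrightarrow> gabs p (S m - S n) \<le> b (min m n)" and "b \<longlonglongrightarrow> 0"
  shows "p_cauchy p S"
  unfolding p_cauchy_def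
proof (intro allI impI)
  fix e :: real
  assume "e > 0"
  then obtain N where "\<forall>n\<ge>N. norm (b n - 0) < e"
    using LIMSEQ_D[OF assms(2)] by blast
  hence N: "\<And>n. n \<ge> N \<Longrightarrow> b n < e" by auto
  have "gabs p (S m - S n) < e" if "max M N \<le> m" "max M N \<le> n" for m n
    using assms(1)[of m n] N[of "min m n"] that by simp
  thus "\<exists>M. \<forall>m\<ge>M. \<forall>n\<ge>M. gabs p (S m - S n) < e" by blast
qed

lemma p_cauchy_digit_series:
  fixes num den p :: complex and k :: int and d :: "int \<Rightarrow> int"
  assumes p: "gauss_prime p" "gdvd p den" "\<not> gdvd p num" and num: "gauss_int num" "num \<noteq> 0"
  shows "p_cauchy p (\<lambda>N. \<Sum>n<N. of_int (d (k - int n)) * (num / den) powi (k - int n))"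
proof -
  obtain c where c: "gauss_int c" "den = p * c" using p(2) by (auto simp: gdvd_def)
  define S where "S N = (\<Sum>n<N. of_int (d (k - int n)) * (num / den) powi (k - int n))" for N
  define b where "b n = gnorm p powi k * inverse (gnorm p) ^ n" for n
  have p_int: "gauss_int p" using p(1) by (simp add: gauss_prime_def)
  have num_pow: "gauss_int (num ^ B)" "num ^ B \<noteq> 0" "\<not> gdvd p (num ^ B)" for B
    using gauss_int_power[OF num(1)] num(2) gauss_prime_dvd_power[OF p(1) num(1)] p(3) by auto
  have block: "gabs p (S m - S n) \<le> b n \<and> gabs p (S n - S m) \<le> b n"
    if range: "n \<le> m" "k \<le> int n" for m n
  proof -
    obtain W where W: "gauss_int W"
      "(\<Sum>i\<in>{n..<m}. of_int (d (k - int i)) * (num / den) powi (k - int i))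
         = p ^ nat (int n - k) * W / num ^ nat (int m - k)"
      using digit_block_prime_power_form[OF num p_int c(1) range] unfolding c(2) by blast
    have "S m = S n + (\<Sum>i\<in>{n..<m}. of_int (d (k - int i)) * (num / den) powi (k - int i))"
      unfolding S_def lessThan_atLeast0 using range
      by (intro sum.atLeastLessThan_concat[symmetric]) auto
    hence diff: "S m - S n = p ^ nat (int n - k) * W / num ^ nat (int m - k)"
      "S n - S m = p ^ nat (int n - k) * (- W) / num ^ nat (int m - k)"
      using W(2) by auto
    have "inverse (gnorm p ^ nat (int n - k)) = b n"
      using range gnorm_gauss_prime_gt_1[OF p(1)]
      by (simp add: b_def power_int_diff power_inverse power_int_inverse divide_inverse
          flip: power_int_of_nat)
    thus ?thesis
      unfolding diff
      using gabs_prime_power_mult_le[OF p(1) W(1) num_pow, of "nat (int n - k)" "nat (int m - k)"]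
        gabs_prime_power_mult_le[OF p(1) gauss_int_uminus[OF W(1)] num_pow,
          of "nat (int n - k)" "nat (int m - k)"]
      by simp
  qed
  have "gabs p (S m - S n) \<le> b (min m n)" if "nat k \<le> min m n" for m n
    using block[of n m] block[of m n] that by (cases "n \<le> m") (auto simp: min_def)
  moreover have "b \<longlonglongrightarrow> 0"
    unfolding b_def using gnorm_gauss_prime_gt_1[OF p(1)]
    by (intro tendsto_mult_right_zero LIMSEQ_power_zero) (simp add: inverse_less_1_iff)
  ultimately show ?thesis unfolding S_def by (rule p_cauchyI)
qed

lemma summable_digit_series:
  fixes \<alpha> :: complex and k D :: int and d :: "int \<Rightarrow> int"
  assumes "cmod \<alpha> > 1" and "\<And>j. j \<le> k \<Longrightarrow> \<bar>d j\<bar> \<le> D"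
  shows "summable (\<lambda>n. of_int (d (k - int n)) * \<alpha> powi (k - int n))"
proof (rule summable_comparison_test')
  show "summable (\<lambda>n. of_int D * cmod \<alpha> powi k * inverse (cmod \<alpha>) ^ n)"
    using assms(1) by (intro summable_mult summable_geometric) (auto simp: inverse_less_1_iff)
  have "\<alpha> \<noteq> 0" using assms(1) by auto
  fix n
  have "norm (of_int (d (k - int n)) * \<alpha> powi (k - int n))
      = \<bar>of_int (d (k - int n))\<bar> * (cmod \<alpha> powi k * inverse (cmod \<alpha>) ^ n)"
    using \<open>\<alpha> \<noteq> 0\<close>
    by (simp add: norm_mult norm_power_int power_int_diff power_inverse divide_inverse norm_inverse
        flip: norm_power)
  also have "\<dots> \<le> of_int D * (cmod \<alpha> powi k * inverse (cmod \<alpha>) ^ n)"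
    using assms(2)[of "k - int n"] by (intro mult_right_mono) auto
  finally show "norm (of_int (d (k - int n)) * \<alpha> powi (k - int n))
      \<le> of_int D * cmod \<alpha> powi k * inverse (cmod \<alpha>) ^ n"
    by (simp add: mult.assoc)
qed

theorem mainTheorem12:
  fixes \<alpha> num den :: complex and a0 a1 a2 k :: int and d :: "int \<Rightarrow> int"
  assumes alpha_rat: "gauss_rat \<alpha>"
    and alpha_nonreal: "Im \<alpha> \<noteq> 0"
    and alpha_big: "cmod \<alpha> > 1"
    and coprime: "gcd (gcd a0 a1) a2 = 1"
    and a2_pos: "a2 > 0"
    and root: "of_int a2 * \<alpha>\<^sup>2 + of_int a1 * \<alpha> + of_int a0 = 0"
    and num_int: "gauss_int num" and den_int: "gauss_int den" and den_nz: "den \<noteq> 0"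
    and frac: "\<alpha> = num / den"
    and no_common: "\<not> (\<exists>q. gauss_prime q \<and> gdvd q num \<and> gdvd q den)"
    and digits: "\<forall>j\<le>k. d j \<in> {0..<\<bar>a0\<bar>}"
  shows "summable (\<lambda>n. of_int (d (k - int n)) * \<alpha> powi (k - int n))
       \<and> (\<forall>p. gauss_prime p \<and> gdvd p den \<longrightarrow>
            p_cauchy p (\<lambda>N. \<Sum>n<N. of_int (d (k - int n)) * \<alpha> powi (k - int n)))"
proof
  show "summable (\<lambda>n. of_int (d (k - int n)) * \<alpha> powi (k - int n))"
    using alpha_big digits by (intro summable_digit_series[where D = "\<bar>a0\<bar>"]) auto
  have "num \<noteq> 0" using alpha_nonreal frac by auto
  then show "\<forall>p. gauss_prime p \<and> gdvd p den \<longrightarrow>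
      p_cauchy p (\<lambda>N. \<Sum>n<N. of_int (d (k - int n)) * \<alpha> powi (k - int n))"
    using p_cauchy_digit_series[OF _ _ _ num_int] no_common unfolding frac by blast
qed

end
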